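(* The canonical model $\langle W,\mathcal{N},V\rangle$ for IML1 satisfies the $T$-condition: for all $w,v\in W$, if $v\in\bigcup\mathcal{N}_w$ then $\bigcap\mathcal{N}_v\subseteq\bigcup\mathcal{N}_w$.
   Context: Formulas are built from a denumerable set $PV$ of propositional variables and $\bot$ using $\land,\lor,\rightarrow$ and unary $\Delta$. The axioms of IML1 are all instances of the axiom schemes of intuitionistic propositional calculus, of K: $\Delta(\varphi\rightarrow\psi)\rightarrow(\Delta\varphi\rightarrow\Delta\psi)$ and of T: $\Delta\varphi\rightarrow\varphi$. An IML1-theory is a set of formulas containing all axioms and closed under modus ponens and under RN ($\varphi\in w\Rightarrow\Delta\varphi\in w$). A theory $w$ is prime if $\bot\notin w$ and $\varphi\lor\psi\in w$ iff ($\varphi\in w$ or $\psi\in w$). Canonical model: $W$ = set of all prime IML1-theories; for $w\in W$, $A_w=\{v\in W:w\subseteq v\}$, $B_w=\{v\in W:\forall\varphi\,(\Delta\varphi\in w\Rightarrow\varphi\in v)\}$, $\mathcal{N}_w=\{X\subseteq W:A_w\subseteq X\subseteq B_w\}$, so $\bigcap\mathcal{N}_w=A_w$ and $\bigcup\mathcal{N}_w=B_w$; $V(q)=\{w\in W:q\in w\}$. *)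

theory Defs
  imports Main
begin

datatype 'p fm =
    Var 'p
  | Bot
  | And "'p fm" "'p fm"
  | Or "'p fm" "'p fm"
  | Imp "'p fm" "'p fm"
  | Box "'p fm"   (* the unary operator Delta *)

inductive IML1_axiom :: "'p fm \<Rightarrow> bool" where
  A1: "IML1_axiom (Imp a (Imp b a))"
| A2: "IML1_axiom (Imp (Imp a (Imp b c)) (Imp (Imp a b) (Imp a c)))"
| A3: "IML1_axiom (Imp (And a b) a)"
| A4: "IML1_axiom (Imp (And a b) b)"
| A5: "IML1_axiom (Imp a (Imp b (And a b)))"
| A6: "IML1_axiom (Imp a (Or a b))"
| A7: "IML1_axiom (Imp b (Or a b))"
| A8: "IML1_axiom (Imp (Imp a c) (Imp (Imp b c) (Imp (Or a b) c)))"
| A9: "IML1_axiom (Imp Bot a)"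
| K: "IML1_axiom (Imp (Box (Imp a b)) (Imp (Box a) (Box b)))"
| T: "IML1_axiom (Imp (Box a) a)"

definition IML1_theory :: "'p fm set \<Rightarrow> bool" where
  "IML1_theory w \<longleftrightarrow>
     (\<forall>a. IML1_axiom a \<longrightarrow> a \<in> w) \<and>
     (\<forall>a b. a \<in> w \<longrightarrow> Imp a b \<in> w \<longrightarrow> b \<in> w) \<and>
     (\<forall>a. a \<in> w \<longrightarrow> Box a \<in> w)"

definition prime_theory :: "'p fm set \<Rightarrow> bool" where
  "prime_theory w \<longleftrightarrow> IML1_theory w \<and> Bot \<notin> w \<and>
     (\<forall>a b. Or a b \<in> w \<longleftrightarrow> (a \<in> w \<or> b \<in> w))"

definition canW :: "'p fm set set" where
  "canW = {w. prime_theory w}"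

definition canA :: "'p fm set \<Rightarrow> 'p fm set set" where
  "canA w = {v \<in> canW. w \<subseteq> v}"

definition canB :: "'p fm set \<Rightarrow> 'p fm set set" where
  "canB w = {v \<in> canW. \<forall>a. Box a \<in> w \<longrightarrow> a \<in> v}"

definition canN :: "'p fm set \<Rightarrow> 'p fm set set set" where
  "canN w = {X. X \<subseteq> canW \<and> canA w \<subseteq> X \<and> X \<subseteq> canB w}"

definition canV :: "'p \<Rightarrow> 'p fm set set" where
  "canV q = {w \<in> canW. Var q \<in> w}"

end

theory Submission
  imports Defs
begin

text \<open>Since \<open>w\<close> is closed under RN, \<open>\<Delta>\<phi> \<in> w\<close> gives \<open>\<Delta>\<Delta>\<phi> \<in> w\<close>, hence \<open>\<Delta>\<phi> \<in> v\<close> for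
  every \<open>v \<in> B\<^sub>w\<close>; so \<open>\<Delta>\<phi>\<close> lies in every extension \<open>u \<supseteq> v\<close>, and axiom T yields \<open>\<phi> \<in> u\<close>.
  Thus \<open>A\<^sub>v \<subseteq> B\<^sub>w\<close>, and the neighbourhood systems attain their intersection \<open>A\<close> and union \<open>B\<close>.\<close>

lemma IML1_theory_BoxD: "IML1_theory u \<Longrightarrow> Box a \<in> u \<Longrightarrow> a \<in> u"
  unfolding IML1_theory_def by (meson IML1_axiom.T)

lemma IML1_theory_BoxI: "IML1_theory u \<Longrightarrow> a \<in> u \<Longrightarrow> Box a \<in> u"
  unfolding IML1_theory_def by blast

lemma canW_IML1_theory: "u \<in> canW \<Longrightarrow> IML1_theory u"
  unfolding canW_def prime_theory_def by blast

lemma canA_subset_canB: "u \<in> canW \<Longrightarrow> canA u \<subseteq> canB u"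
  unfolding canA_def canB_def using canW_IML1_theory IML1_theory_BoxD by blast

lemma Union_canN:
  assumes "u \<in> canW"
  shows "\<Union> (canN u) = canB u"
proof
  show "\<Union> (canN u) \<subseteq> canB u" unfolding canN_def by blast
  have "canB u \<in> canN u"
    using canA_subset_canB[OF assms] unfolding canN_def canB_def by blast
  then show "canB u \<subseteq> \<Union> (canN u)" by blast
qed

lemma Inter_canN:
  assumes "u \<in> canW"
  shows "\<Inter> (canN u) = canA u"
proof
  have "canA u \<in> canN u"
    using canA_subset_canB[OF assms] unfolding canN_def canA_def by blast
  then show "\<Inter> (canN u) \<subseteq> canA u" by blast
  show "canA u \<subseteq> \<Inter> (canN u)" unfolding canN_def by blast
qed

lemma canA_subset_canB_of_canB:
  assumes "IML1_theory w" and "v \<in> canB w"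
  shows "canA v \<subseteq> canB w"
proof
  fix u assume "u \<in> canA v"
  then have u: "u \<in> canW" "v \<subseteq> u" unfolding canA_def by auto
  have "a \<in> u" if "Box a \<in> w" for a
  proof -
    have "Box (Box a) \<in> w" using IML1_theory_BoxI[OF assms(1) that] .
    then have "Box a \<in> u" using assms(2) u(2) unfolding canB_def by blast
    then show "a \<in> u" using IML1_theory_BoxD canW_IML1_theory[OF u(1)] by blast
  qed
  then show "u \<in> canB w" using u(1) unfolding canB_def by blast
qed

theorem lemma6p2:
  fixes w v :: "nat fm set"
  assumes "w \<in> canW" and "v \<in> canW"
    and "v \<in> \<Union> (canN w)"
  shows "\<Inter> (canN v) \<subseteq> \<Union> (canN w)"
  using canA_subset_canB_of_canB[OF canW_IML1_theory[OF assms(1)]] assms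
  by (simp add: Union_canN Inter_canN)

end
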